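(* Let $i\geq 3$ be an integer and let $D$ be a strong digraph with $D\in\mathcal{LE}_i$. Then $D$ has a small quasi-kernel, i.e. an independent set $Q\subseteq V(D)$ with $|Q|\leq |V(D)|/2$ such that for every vertex $x\notin Q$ there is a directed path of length $1$ or $2$ from $x$ to some vertex of $Q$.
   Context: All digraphs are finite, without loops or multiple arcs. Paths and cycles are directed; the length of a path or cycle is its number of arcs. A set of vertices is independent if no two distinct vertices of it are joined by an arc. A digraph is strong if for every ordered pair of vertices $x,y$ there is a directed path from $x$ to $y$. For a subdigraph $H$ of a digraph $D$, an ear of $H$ in $D$ is either a directed path in $D$ whose two end vertices lie in $H$ and whose internal vertices do not lie in $H$, or a directed cycle in $D$ having exactly one vertex in $H$. An ear decomposition of a strong digraph $D$ is a sequence $(D_0,D_1,\ldots,D_k)$ of strong subdigraphs of $D$ such that $D_0$ is a directed cycle, $D_{j+1}=D_j\cup P_j$ where $P_j$ is an ear of $D_j$ in $D$ for every $j\in\{0,\ldots,k-1\}$, and $D_k=D$. For an integer $i\geq 1$, $\mathcal{LE}_i$ denotes the family of strong digraphs having an ear decomposition in which every ear has length at least $i$. *)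

theory Defs
  imports Main
begin

text \<open>A digraph is given by a finite vertex set V and an arc relation A \<subseteq> V \<times> V
  without loops (multiple arcs are impossible for a relation).\<close>
definition digraph :: "'a set \<Rightarrow> ('a \<times> 'a) set \<Rightarrow> bool" where
  "digraph V A \<longleftrightarrow> finite V \<and> A \<subseteq> V \<times> V \<and> (\<forall>v. (v, v) \<notin> A)"

definition strong :: "'a set \<Rightarrow> ('a \<times> 'a) set \<Rightarrow> bool" where
  "strong V A \<longleftrightarrow> (\<forall>x\<in>V. \<forall>y\<in>V. (x, y) \<in> A\<^sup>*)"

definition walk_arcs :: "'a list \<Rightarrow> ('a \<times> 'a) set" where
  "walk_arcs ws = set (zip ws (tl ws))"

text \<open>A directed path, given by its vertex sequence; its length is length ws - 1.\<close>
definition is_path :: "('a \<times> 'a) set \<Rightarrow> 'a list \<Rightarrow> bool" where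
  "is_path A ws \<longleftrightarrow> ws \<noteq> [] \<and> distinct ws \<and> walk_arcs ws \<subseteq> A"

text \<open>A directed cycle, given as closed vertex sequence v0 v1 ... v(k-1) v0 (k \<ge> 2);
  its length is k = length ws - 1.\<close>
definition is_cycle :: "('a \<times> 'a) set \<Rightarrow> 'a list \<Rightarrow> bool" where
  "is_cycle A ws \<longleftrightarrow> length ws \<ge> 3 \<and> hd ws = last ws \<and> distinct (tl ws) \<and> walk_arcs ws \<subseteq> A"

definition is_ear :: "('a \<times> 'a) set \<Rightarrow> 'a set \<Rightarrow> 'a list \<Rightarrow> bool" where
  "is_ear A H ws \<longleftrightarrow>
     (is_path A ws \<and> length ws \<ge> 2 \<and> hd ws \<in> H \<and> last ws \<in> H \<and>
        (\<forall>v \<in> set (butlast (tl ws)). v \<notin> H))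
   \<or> (is_cycle A ws \<and> card (set ws \<inter> H) = 1)"

text \<open>Subdigraphs (vertex set, arc set) obtainable from a directed cycle of D by
  successively adding ears of length at least i; these are exactly the D_j of an
  ear decomposition all of whose ears have length \<ge> i.\<close>
inductive ear_built :: "nat \<Rightarrow> 'a set \<Rightarrow> ('a \<times> 'a) set \<Rightarrow> 'a set \<Rightarrow> ('a \<times> 'a) set \<Rightarrow> bool"
  for i V A where
  start: "is_cycle A c \<Longrightarrow> set c \<subseteq> V \<Longrightarrow> ear_built i V A (set c) (walk_arcs c)"
| add_ear: "ear_built i V A H AH \<Longrightarrow> is_ear A H p \<Longrightarrow> set p \<subseteq> V \<Longrightarrow> length p - 1 \<ge> i
     \<Longrightarrow> ear_built i V A (H \<union> set p) (AH \<union> walk_arcs p)"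

definition LE :: "nat \<Rightarrow> 'a set \<Rightarrow> ('a \<times> 'a) set \<Rightarrow> bool" where
  "LE i V A \<longleftrightarrow> strong V A \<and> ear_built i V A V A"

definition independent :: "('a \<times> 'a) set \<Rightarrow> 'a set \<Rightarrow> bool" where
  "independent A Q \<longleftrightarrow> (\<forall>u\<in>Q. \<forall>v\<in>Q. u \<noteq> v \<longrightarrow> (u, v) \<notin> A)"

definition small_quasi_kernel :: "'a set \<Rightarrow> ('a \<times> 'a) set \<Rightarrow> 'a set \<Rightarrow> bool" where
  "small_quasi_kernel V A Q \<longleftrightarrow> Q \<subseteq> V \<and> independent A Q \<and> 2 * card Q \<le> card V \<and>
     (\<forall>x\<in>V - Q. \<exists>p. is_path A p \<and> hd p = x \<and> last p \<in> Q \<and> length p - 1 \<in> {1, 2})"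

end

theory Submission
  imports Defs
begin

text \<open>Induction along the ear decomposition, maintaining a small quasi-kernel Q of the
  subdigraph built so far. An ear of length at least 3 is a detour h0, x_0, ..., x_(m-1),
  x_m = h1 through m \<ge> 2 new vertices. Let s be 0, 1 or 2 according as h1 \<in> Q, h1 has an
  arc into Q, or neither. Adding to Q the new vertices x_j with m - j + s divisible by 3
  keeps Q independent, lets every other new vertex reach Q in at most two steps along the
  ear, and adds at most (m + s) div 3 \<le> m / 2 vertices. The only conflict, x_0 marked while
  h0 \<in> Q, is resolved by marking x_1 instead. The initial cycle is handled as a detour
  from one of its vertices h back to h, starting from Q = {h}.\<close>

definition reaches_within_two :: "('a \<times> 'a) set \<Rightarrow> 'a set \<Rightarrow> 'a \<Rightarrow> bool" where
  "reaches_within_two A Q x \<longleftrightarrow>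
     (\<exists>p. is_path A p \<and> hd p = x \<and> last p \<in> Q \<and> length p - 1 \<in> {1, 2})"

lemma small_quasi_kernel_iff:
  "small_quasi_kernel V A Q \<longleftrightarrow>
     Q \<subseteq> V \<and> independent A Q \<and> 2 * card Q \<le> card V \<and> (\<forall>x\<in>V - Q. reaches_within_two A Q x)"
  unfolding small_quasi_kernel_def reaches_within_two_def ..

lemma reaches_within_two_mono:
  "reaches_within_two A Q x \<Longrightarrow> A \<subseteq> A' \<Longrightarrow> Q \<subseteq> Q' \<Longrightarrow> reaches_within_two A' Q' x"
  unfolding reaches_within_two_def is_path_def by blast

lemma reaches_within_two_arc:
  "(x, y) \<in> A \<Longrightarrow> y \<in> Q \<Longrightarrow> x \<noteq> y \<Longrightarrow> reaches_within_two A Q x"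
  unfolding reaches_within_two_def is_path_def walk_arcs_def by (intro exI[of _ "[x, y]"]) auto

lemma reaches_within_two_arcs:
  "(x, y) \<in> A \<Longrightarrow> (y, z) \<in> A \<Longrightarrow> z \<in> Q \<Longrightarrow> distinct [x, y, z] \<Longrightarrow> reaches_within_two A Q x"
  unfolding reaches_within_two_def is_path_def walk_arcs_def by (intro exI[of _ "[x, y, z]"]) auto

lemma walk_arcs_simps [simp]:
  "walk_arcs [] = {}"
  "walk_arcs [a] = {}"
  "walk_arcs (a # b # xs) = insert (a, b) (walk_arcs (b # xs))"
  by (auto simp: walk_arcs_def)

lemma walk_arcs_Cons: "xs \<noteq> [] \<Longrightarrow> walk_arcs (a # xs) = insert (a, hd xs) (walk_arcs xs)"
  by (cases xs) auto

lemma walk_arcs_append: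
  "walk_arcs (xs @ ys) = walk_arcs xs \<union> walk_arcs ys \<union>
     (if xs = [] \<or> ys = [] then {} else {(last xs, hd ys)})"
  by (induction xs) (auto simp: walk_arcs_Cons)

lemma walk_arcs_conv_nth: "walk_arcs ws = {(ws ! j, ws ! Suc j) | j. Suc j < length ws}"
  unfolding walk_arcs_def set_zip by (auto simp: nth_tl)

lemma walk_arcs_subset: "walk_arcs ws \<subseteq> set ws \<times> set ws"
  unfolding walk_arcs_conv_nth by (auto intro: nth_mem)

lemma walk_arcs_rotate:
  "xs \<noteq> [] \<Longrightarrow> ys \<noteq> [] \<Longrightarrow> walk_arcs (xs @ ys @ [hd xs]) = walk_arcs (ys @ xs @ [hd ys])"
  by (auto simp: walk_arcs_append)

lemma is_cycle_rotate:
  assumes cycle: "is_cycle A c" and h: "h \<in> set c"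
  obtains us where "distinct (h # us)" "set c = insert h (set us)"
    "walk_arcs c = walk_arcs (h # us @ [h])" "length c = length us + 2"
proof -
  define ring where "ring = butlast c"
  have len: "3 \<le> length c" and "hd c = last c" and "distinct (tl c)"
    using cycle unfolding is_cycle_def by auto
  then have c_ring: "c = ring @ [hd ring]"
    unfolding ring_def by (cases c rule: rev_cases) (auto simp: hd_append split: if_splits)
  have "tl c = tl ring @ [hd ring]"
    using c_ring len by (cases ring) auto
  then have ring_distinct: "distinct ring"
    using \<open>distinct (tl c)\<close> c_ring len by (cases ring) auto
  have "h \<in> set ring"
    using h c_ring len by (cases ring) auto
  then obtain xs ys where ring: "ring = xs @ h # ys"
    by (meson split_list)
  have "walk_arcs c = walk_arcs (h # (ys @ xs) @ [h])"
  proof (cases "xs = []")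
    case False
    then show ?thesis
      using c_ring ring walk_arcs_rotate[of xs "h # ys"] by (simp add: hd_append)
  qed (use c_ring ring in simp)
  moreover have "distinct (h # ys @ xs)" "set c = insert h (set (ys @ xs))"
    "length c = length (ys @ xs) + 2"
    using ring_distinct c_ring ring by (auto simp: hd_append)
  ultimately show thesis
    using that by blast
qed

lemma is_ear_detour:
  assumes "is_ear A H p"
  obtains h0 h1 us where "h0 \<in> H" "h1 \<in> H" "distinct us" "set us \<inter> H = {}"
    "H \<union> set p = H \<union> set us" "walk_arcs p = walk_arcs (h0 # us @ [h1])"
    "length p = length us + 2"
  using assms unfolding is_ear_def
proof (elim disjE conjE)
  assume path: "is_path A p" and "2 \<le> length p" and ends: "hd p \<in> H" "last p \<in> H"
    and inner: "\<forall>v\<in>set (butlast (tl p)). v \<notin> H"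
  then have p: "p = hd p # butlast (tl p) @ [last p]"
    by (cases p) auto
  then have "distinct (butlast (tl p))"
    using path unfolding is_path_def by (metis distinct.simps(2) distinct_append)
  moreover have "H \<union> set p = H \<union> set (butlast (tl p))"
    using ends by (subst p) auto
  moreover have "length p = length (butlast (tl p)) + 2"
    by (subst p) simp
  ultimately show thesis
    using that[of "hd p" "last p" "butlast (tl p)"] ends inner p by (metis disjoint_iff)
next
  assume cycle: "is_cycle A p" and "card (set p \<inter> H) = 1"
  then obtain h where h: "set p \<inter> H = {h}"
    using card_1_singletonE by metis
  then obtain us where "distinct (h # us)" "set p = insert h (set us)"
    "walk_arcs p = walk_arcs (h # us @ [h])" "length p = length us + 2"
    using is_cycle_rotate[OF cycle, of h] by blast
  moreover have "h \<in> H" "set us \<inter> H = {}"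
    using h calculation(1,2) by auto
  ultimately show thesis
    using that[of h h us] by auto
qed

text \<open>The indices j \<le> m of the marked vertices x_j of a detour; b tells whether h0 \<in> Q, and
  j mod 3 = (m + s) mod 3 is the condition that 3 divides m - j + s.\<close>

definition ear_marks :: "bool \<Rightarrow> nat \<Rightarrow> nat \<Rightarrow> nat set" where
  "ear_marks b m s = {j. j \<le> m \<and>
     (if b \<and> (m + s) mod 3 = 0 then j = 1 \<or> 0 < j \<and> j mod 3 = 0 else j mod 3 = (m + s) mod 3)}"

lemma ear_marks_le: "j \<in> ear_marks b m s \<Longrightarrow> j \<le> m"
  by (simp add: ear_marks_def)

lemma last_in_ear_marks_iff:
  assumes "s \<le> 2" "1 \<le> m" "2 \<le> m \<or> s = 0"
  shows "m \<in> ear_marks b m s \<longleftrightarrow> s = 0"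
proof -
  have "s = 0 \<or> s = 1 \<or> s = 2"
    using assms(1) by linarith
  then show ?thesis
    using assms(2,3) by (auto simp: ear_marks_def; presburger)
qed

lemma zero_not_in_ear_marks: "b \<Longrightarrow> 0 \<notin> ear_marks b m s"
  by (simp add: ear_marks_def)

lemma Suc_not_in_ear_marks: "j \<in> ear_marks b m s \<Longrightarrow> Suc j \<notin> ear_marks b m s"
  by (auto simp: ear_marks_def mod_Suc split: if_splits)

lemma ear_marks_dominating:
  assumes "j < m" "j \<notin> ear_marks b m s" "s \<le> 2"
  shows "Suc j \<in> ear_marks b m s \<or> Suc (Suc j) \<in> ear_marks b m s \<or> Suc j = m \<and> s = 1"
proof (cases "Suc (Suc j) \<le> m")
  case True
  then show ?thesis
    using assms(1,2) by (auto simp: ear_marks_def mod_Suc split: if_splits)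
next
  case False
  then have "m = Suc j"
    using assms(1) by simp
  moreover have "s = 0 \<or> s = 1 \<or> s = 2"
    using assms(3) by linarith
  ultimately show ?thesis
    using assms(2) by (auto simp: ear_marks_def mod_Suc split: if_splits)
qed

lemma card_ear_marks_le: "card (ear_marks b m s - {m}) \<le> (m + s) div 3"
proof -
  define n where "n = (m + s) div 3"
  \<comment> \<open>the marks below m are m + s - 3k for 1 \<le> k \<le> n;
    a shifted mark 1 takes the place of k = n\<close>
  define f where "f k = (if b \<and> (m + s) mod 3 = 0 \<and> k = n then 1 else m + s - 3 * k)" for k
  have "j \<in> f ` {1..n}" if j: "j \<in> ear_marks b m s" "j \<noteq> m" for j
  proof (cases "b \<and> (m + s) mod 3 = 0 \<and> j = 1")
    case True
    then have "1 \<le> n"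
      using j unfolding n_def ear_marks_def by auto
    then show ?thesis
      using True unfolding f_def by force
  next
    case False
    then have j_less: "j < m" and j_mod: "j mod 3 = (m + s) mod 3"
      and j_ge: "b \<and> (m + s) mod 3 = 0 \<Longrightarrow> 3 \<le> j"
      using j by (auto simp: ear_marks_def split: if_splits)
    define k where "k = (m + s - j) div 3"
    have "3 dvd m + s - j"
      using mod_eq_dvd_iff_nat[of j "m + s" 3] j_less j_mod by simp
    then have "m + s = j + 3 * k"
      using j_less unfolding k_def by simp
    then have "1 \<le> k" "k \<le> n" "b \<and> (m + s) mod 3 = 0 \<Longrightarrow> k \<noteq> n" "f k = j"
      using j_less j_ge unfolding n_def f_def by auto
    then show ?thesis
      by force
  qed
  then have "ear_marks b m s - {m} \<subseteq> f ` {1..n}"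
    by blast
  then show ?thesis
    using surj_card_le[of "{1..n}"] unfolding n_def by simp
qed

lemma card_ear_marks:
  assumes "s \<le> 2" "1 \<le> m" "2 \<le> m \<or> s = 0"
  shows "2 * card (ear_marks b m s - {m}) \<le> m"
    and "s = 0 \<Longrightarrow> 2 * card (ear_marks b m s - {m}) + 1 \<le> m"
proof -
  define q where "q = (m + s) div 3"
  have "3 * q \<le> m + s"
    unfolding q_def by (rule times_div_less_eq_dividend)
  then have "2 * q \<le> m \<and> (s = 0 \<longrightarrow> 2 * q + 1 \<le> m)"
    using assms by (cases "q = 0 \<or> q = 1") auto
  then show "2 * card (ear_marks b m s - {m}) \<le> m"
    and "s = 0 \<Longrightarrow> 2 * card (ear_marks b m s - {m}) + 1 \<le> m"
    using card_ear_marks_le[of b m s] unfolding q_def by linarith+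
qed

locale detour =
  fixes H :: "'a set" and AH :: "('a \<times> 'a) set" and Q :: "'a set"
    and h0 h1 :: 'a and us :: "'a list"
  assumes arcs_subset: "AH \<subseteq> H \<times> H"
    and Q_subset: "Q \<subseteq> H"
    and independent_Q: "independent AH Q"
    and absorbing_Q: "\<forall>x\<in>H - Q. reaches_within_two AH Q x"
    and h0_in: "h0 \<in> H" and h1_in: "h1 \<in> H"
    and distinct_us: "distinct us"
    and us_disjoint: "set us \<inter> H = {}"
    and us_nonempty: "us \<noteq> []"
    and long_or_h1_in_Q: "2 \<le> length us \<or> h1 \<in> Q"
    \<comment> \<open>the second alternative covers the initial cycle, which may have length 2\<close>
begin

definition m :: nat where "m = length us"

definition vs :: "'a list" where "vs = us @ [h1]"

definition s :: nat where
  "s = (if h1 \<in> Q then 0 else if \<exists>y\<in>Q. (h1, y) \<in> AH then 1 else 2)"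

definition marks :: "nat set" where "marks = ear_marks (h0 \<in> Q) m s"

definition S :: "'a set" where "S = (\<lambda>j. vs ! j) ` (marks - {m})"

definition G :: "('a \<times> 'a) set" where "G = AH \<union> walk_arcs (h0 # us @ [h1])"

lemma s_le: "s \<le> 2" and s_eq_0_iff: "s = 0 \<longleftrightarrow> h1 \<in> Q"
  by (auto simp: s_def)

lemma m_ge: "1 \<le> m" "2 \<le> m \<or> s = 0"
  using us_nonempty long_or_h1_in_Q s_eq_0_iff by (auto simp: m_def Suc_le_eq)

lemma length_vs: "length vs = Suc m"
  by (simp add: vs_def m_def)

lemma distinct_vs: "distinct vs"
  using distinct_us us_disjoint h1_in by (auto simp: vs_def)

lemma vs_last: "vs ! m = h1"
  by (simp add: vs_def m_def)

lemma vs_new: "j < m \<Longrightarrow> vs ! j \<in> set us"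
  by (simp add: vs_def m_def nth_append)

lemma set_us: "set us = (\<lambda>j. vs ! j) ` {..<m}"
  by (auto simp: vs_def m_def in_set_conv_nth nth_append)

lemma vs_eq_iff: "j \<le> m \<Longrightarrow> k \<le> m \<Longrightarrow> vs ! j = vs ! k \<longleftrightarrow> j = k"
  using distinct_vs nth_eq_iff_index_eq[of vs j k] by (simp add: length_vs)

lemma S_subset: "S \<subseteq> set us"
  using vs_new ear_marks_le[of _ "h0 \<in> Q" m s] by (auto simp: S_def marks_def less_le)

lemma G_eq: "G = AH \<union> insert (h0, vs ! 0) {(vs ! j, vs ! Suc j) | j. j < m}"
  unfolding G_def walk_arcs_Cons[of "us @ [h1]" h0, simplified] walk_arcs_conv_nth[of "us @ [h1]"]
  by (simp add: vs_def m_def hd_conv_nth)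

lemma marks_le: "j \<in> marks \<Longrightarrow> j \<le> m"
  by (simp add: marks_def ear_marks_le)

lemma vs_in_S_iff: "j < m \<Longrightarrow> vs ! j \<in> S \<longleftrightarrow> j \<in> marks"
proof
  assume "j < m" "vs ! j \<in> S"
  then obtain k where "k \<in> marks" "k \<noteq> m" "vs ! j = vs ! k"
    by (auto simp: S_def)
  then show "j \<in> marks"
    using vs_eq_iff[of j k] marks_le \<open>j < m\<close> by simp
next
  assume "j < m" "j \<in> marks"
  then show "vs ! j \<in> S"
    by (auto simp: S_def)
qed

lemma vs_in_kernel_iff:
  assumes "j \<le> m"
  shows "vs ! j \<in> Q \<union> S \<longleftrightarrow> j \<in> marks"
proof (cases "j = m")
  case True
  have "h1 \<notin> S"
    using S_subset us_disjoint h1_in by blast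
  then show ?thesis
    using True vs_last s_eq_0_iff last_in_ear_marks_iff[OF s_le m_ge] by (simp add: marks_def)
next
  case False
  then have "j < m"
    using assms by simp
  then have "vs ! j \<notin> Q"
    using vs_new us_disjoint Q_subset by blast
  then show ?thesis
    using vs_in_S_iff \<open>j < m\<close> by simp
qed

lemma independent_kernel: "independent G (Q \<union> S)"
  unfolding independent_def
proof (intro ballI impI notI)
  fix u v
  assume u: "u \<in> Q \<union> S" and v: "v \<in> Q \<union> S" and "u \<noteq> v" and uv: "(u, v) \<in> G"
  have S_new: "S \<inter> H = {}"
    using S_subset us_disjoint by blast
  consider "(u, v) \<in> AH" | "(u, v) = (h0, vs ! 0)" | j where "j < m" "u = vs ! j" "v = vs ! Suc j"
    using uv unfolding G_eq by blast
  then show False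
  proof cases
    case 1
    then have "u \<in> Q" "v \<in> Q"
      using arcs_subset u v S_new by blast+
    then show False
      using independent_Q 1 \<open>u \<noteq> v\<close> unfolding independent_def by blast
  next
    case 2
    then have "h0 \<in> Q"
      using u S_new h0_in by blast
    moreover have "0 \<in> marks"
      using 2 v vs_in_kernel_iff[of 0] by simp
    ultimately show False
      using zero_not_in_ear_marks by (simp add: marks_def)
  next
    case 3
    then have "j \<in> marks" "Suc j \<in> marks"
      using u v vs_in_kernel_iff by simp_all
    then show False
      using Suc_not_in_ear_marks by (simp add: marks_def)
  qed
qed

lemma new_vertex_reaches_kernel:
  assumes "j < m" "j \<notin> marks"
  shows "reaches_within_two G (Q \<union> S) (vs ! j)"
proof -
  have step: "(vs ! k, vs ! Suc k) \<in> G" if "k < m" for k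
    using that unfolding G_eq by blast
  consider "Suc j \<in> marks" | "Suc (Suc j) \<in> marks" | "Suc j = m" "s = 1"
    using ear_marks_dominating[OF assms(1) _ s_le] assms(2) unfolding marks_def by blast
  then show ?thesis
  proof cases
    case 1
    then have "Suc j \<le> m"
      by (rule marks_le)
    then have "vs ! Suc j \<in> Q \<union> S" "vs ! j \<noteq> vs ! Suc j"
      using vs_in_kernel_iff[of "Suc j"] vs_eq_iff[of j "Suc j"] 1 by simp_all
    then show ?thesis
      using reaches_within_two_arc[OF step[OF assms(1)]] by blast
  next
    case 2
    then have "Suc (Suc j) \<le> m"
      by (rule marks_le)
    then have "vs ! Suc (Suc j) \<in> Q \<union> S" "distinct [vs ! j, vs ! Suc j, vs ! Suc (Suc j)]"
      using vs_in_kernel_iff[of "Suc (Suc j)"] vs_eq_iff[of j "Suc j"] vs_eq_iff[of j "Suc (Suc j)"]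
        vs_eq_iff[of "Suc j" "Suc (Suc j)"] 2
      by simp_all
    moreover have "Suc j < m"
      using \<open>Suc (Suc j) \<le> m\<close> by simp
    ultimately show ?thesis
      using reaches_within_two_arcs[OF step[OF assms(1)] step] by blast
  next
    case 3
    then obtain y where y: "y \<in> Q" "(h1, y) \<in> AH"
      by (auto simp: s_def split: if_splits)
    have "vs ! j \<notin> H"
      using vs_new[OF assms(1)] us_disjoint by blast
    moreover have "y \<in> H"
      using y Q_subset by blast
    moreover have "h1 \<notin> Q"
      using 3 s_eq_0_iff by simp
    moreover have "vs ! j \<noteq> h1"
      using vs_eq_iff[of j m] vs_last assms(1) by simp
    ultimately have "distinct [vs ! j, h1, y]"
      using y by auto
    moreover have "(vs ! j, h1) \<in> G"
      using step[OF assms(1)] 3 vs_last by simp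
    moreover have "(h1, y) \<in> G"
      using y by (simp add: G_def)
    ultimately show ?thesis
      using reaches_within_two_arcs[of "vs ! j" h1 G y "Q \<union> S"] y(1) by simp
  qed
qed

lemma kernel_absorbing: "\<forall>x\<in>H \<union> set us - (Q \<union> S). reaches_within_two G (Q \<union> S) x"
proof
  fix x
  assume x: "x \<in> H \<union> set us - (Q \<union> S)"
  show "reaches_within_two G (Q \<union> S) x"
  proof (cases "x \<in> H")
    case True
    then have "reaches_within_two AH Q x"
      using absorbing_Q x by blast
    then show ?thesis
      by (rule reaches_within_two_mono) (auto simp: G_def)
  next
    case False
    then obtain j where j: "j < m" "x = vs ! j"
      using x set_us by auto
    then have "j \<notin> marks"
      using x vs_in_kernel_iff[of j] by simp
    then show ?thesis
      using new_vertex_reaches_kernel j by simp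
  qed
qed

lemma card_S: "2 * card S \<le> m" "h1 \<in> Q \<Longrightarrow> 2 * card S + 1 \<le> m"
proof -
  have "finite marks"
    using marks_le finite_atMost[of m] by (meson finite_subset subsetI atMost_iff)
  then have "card S \<le> card (marks - {m})"
    unfolding S_def by (intro card_image_le) simp
  moreover have "2 * card (marks - {m}) \<le> m" "h1 \<in> Q \<Longrightarrow> 2 * card (marks - {m}) + 1 \<le> m"
    using card_ear_marks[OF s_le m_ge] s_eq_0_iff unfolding marks_def by simp_all
  ultimately show "2 * card S \<le> m" "h1 \<in> Q \<Longrightarrow> 2 * card S + 1 \<le> m"
    by linarith+
qed

end

lemma small_quasi_kernel_add_detour:
  assumes sqk: "small_quasi_kernel H AH Q" and "finite H" and "AH \<subseteq> H \<times> H"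
    and "h0 \<in> H" "h1 \<in> H" "distinct us" "set us \<inter> H = {}" "2 \<le> length us"
  shows "\<exists>Q'. small_quasi_kernel (H \<union> set us) (AH \<union> walk_arcs (h0 # us @ [h1])) Q'"
proof -
  interpret detour H AH Q h0 h1 us
    using assms by unfold_locales (auto simp: small_quasi_kernel_iff)
  have "card (H \<union> set us) = card H + m"
    using \<open>finite H\<close> us_disjoint distinct_us
    by (simp add: card_Un_disjoint distinct_card m_def Int_commute)
  moreover have "card (Q \<union> S) \<le> card Q + card S"
    by (rule card_Un_le)
  ultimately have "2 * card (Q \<union> S) \<le> card (H \<union> set us)"
    using sqk card_S(1) unfolding small_quasi_kernel_iff by linarith
  then have "small_quasi_kernel (H \<union> set us) G (Q \<union> S)"
    using Q_subset S_subset independent_kernel kernel_absorbing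
    by (auto simp: small_quasi_kernel_iff)
  then show ?thesis
    unfolding G_def by blast
qed

lemma small_quasi_kernel_cycle:
  assumes cycle: "is_cycle A c"
  shows "\<exists>Q. small_quasi_kernel (set c) (walk_arcs c) Q"
proof -
  define h where "h = hd c"
  have "h \<in> set c"
    using cycle unfolding is_cycle_def h_def by (cases c) auto
  then obtain us where us: "distinct (h # us)" "set c = insert h (set us)"
    "walk_arcs c = walk_arcs (h # us @ [h])" "length c = length us + 2"
    by (rule is_cycle_rotate[OF cycle])
  have "us \<noteq> []"
    using cycle us(4) unfolding is_cycle_def by auto
  then interpret detour "{h}" "{}" "{h}" h h us
    using us(1) by unfold_locales (auto simp: independent_def)
  have "card (set c) = m + 1"
    using us(1,2) by (simp add: distinct_card m_def)
  moreover have "card ({h} \<union> S) \<le> 1 + card S"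
    using card_Un_le[of "{h}" S] by simp
  ultimately have "2 * card ({h} \<union> S) \<le> card (set c)"
    using card_S(2) by simp
  then have "small_quasi_kernel (set c) G ({h} \<union> S)"
    using S_subset independent_kernel kernel_absorbing us(2)
    by (auto simp: small_quasi_kernel_iff)
  then show ?thesis
    using us(3) unfolding G_def by auto
qed

lemma ear_built_finite_arcs: "ear_built i V A H AH \<Longrightarrow> finite H \<and> AH \<subseteq> H \<times> H"
  by (induction rule: ear_built.induct) (auto dest: subsetD[OF walk_arcs_subset])

lemma ear_built_small_quasi_kernel:
  "ear_built i V A H AH \<Longrightarrow> 3 \<le> i \<Longrightarrow> \<exists>Q. small_quasi_kernel H AH Q"
proof (induction rule: ear_built.induct)
  case (start c)
  show ?case
    by (rule small_quasi_kernel_cycle[OF start.hyps(1)])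
next
  case (add_ear H AH p)
  obtain Q where Q: "small_quasi_kernel H AH Q"
    using add_ear.IH add_ear.prems by blast
  obtain h0 h1 us where detour: "h0 \<in> H" "h1 \<in> H" "distinct us" "set us \<inter> H = {}"
    and vertices: "H \<union> set p = H \<union> set us" and arcs: "walk_arcs p = walk_arcs (h0 # us @ [h1])"
    and length: "length p = length us + 2"
    using is_ear_detour[OF add_ear.hyps(2)] by blast
  have "2 \<le> length us"
    using add_ear.hyps(4) add_ear.prems length by linarith
  then have "\<exists>Q'. small_quasi_kernel (H \<union> set us) (AH \<union> walk_arcs (h0 # us @ [h1])) Q'"
    using small_quasi_kernel_add_detour[OF Q _ _ detour] ear_built_finite_arcs[OF add_ear.hyps(1)]
    by blast
  then show ?case
    using vertices arcs by simp
qed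

theorem mainTheorem3:
  fixes V :: "'a set" and A :: "('a \<times> 'a) set" and i :: nat
  assumes "digraph V A" and "i \<ge> 3" and "strong V A" and "LE i V A"
  shows "\<exists>Q. small_quasi_kernel V A Q"
proof -
  have "ear_built i V A V A"
    using assms(4) unfolding LE_def by blast
  then show ?thesis
    using ear_built_small_quasi_kernel assms(2) by blast
qed

end
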